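(* Let $F_n$ be the free group on $f_1,\dots,f_n$, $g=f_1\cdots f_n$, $R$ the set of conjugates of $f_1,\dots,f_n$. For every $\tau\in B_n$, the automorphism $a\mapsto\tau\star a$ of $F_n$ restricts to a poset isomorphism $([1,g]_R,\le_R)\to([1,g]_R,\le_R)$.
   Context: For a group $G$ with generating set $X$: $\ell_X(a)$ is the minimal $k$ with $a=x_1\cdots x_k$, $x_i\in X\cup X^{-1}$; $a\le_X b$ iff $\ell_X(a)+\ell_X(a^{-1}b)=\ell_X(b)$; $[1,b]_X=\{a:a\le_Xb\}$. The braid group $B_n=\langle\sigma_1,\dots,\sigma_{n-1}\rangle$ acts on $F_n$ by automorphisms (denoted $\tau\star a$), where $\sigma_i$ acts by $\sigma_i\star f_i=f_{i+1}$, $\sigma_i\star f_{i+1}=f_{i+1}^{-1}f_if_{i+1}$, and $\sigma_i\star f_j=f_j$ for $j\notin\{i,i+1\}$; equivalently this is the action of $B_n$, viewed as the mapping class group of the $n$-punctured disk relative to its boundary, on its fundamental group $F_n$. *)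

theory Defs
  imports Main
begin

text \<open>A letter (i, False) stands for f_i, a letter (i, True) for f_i inverse.
  Elements of F_n are freely reduced words all of whose letters have index in {1..n}.\<close>

type_synonym letter = "nat \<times> bool"

fun red_cons :: "letter \<Rightarrow> letter list \<Rightarrow> letter list" where
  "red_cons x [] = [x]"
| "red_cons x (y # ys) = (if fst x = fst y \<and> snd x \<noteq> snd y then ys else x # y # ys)"

definition reduce :: "letter list \<Rightarrow> letter list" where
  "reduce xs = foldr red_cons xs []"

fun reduced :: "letter list \<Rightarrow> bool" where
  "reduced [] = True"
| "reduced [x] = True"
| "reduced (x # y # ys) = (\<not> (fst x = fst y \<and> snd x \<noteq> snd y) \<and> reduced (y # ys))"

definition FG :: "nat \<Rightarrow> letter list set" where
  "FG n = {w. reduced w \<and> (\<forall>l \<in> set w. fst l \<in> {1..n})}"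

definition fmul :: "letter list \<Rightarrow> letter list \<Rightarrow> letter list" where
  "fmul x y = reduce (x @ y)"

definition finv :: "letter list \<Rightarrow> letter list" where
  "finv x = rev (map (\<lambda>(i, b). (i, \<not> b)) x)"

definition gen :: "nat \<Rightarrow> letter list" where
  "gen i = [(i, False)]"

definition fprod :: "letter list list \<Rightarrow> letter list" where
  "fprod xs = foldr fmul xs []"

definition gelt :: "nat \<Rightarrow> letter list" where
  "gelt n = fprod (map gen [1..<n+1])"

definition Rset :: "nat \<Rightarrow> letter list set" where
  "Rset n = {fmul (fmul w (gen i)) (finv w) | w i. w \<in> FG n \<and> i \<in> {1..n}}"

definition lenR :: "nat \<Rightarrow> letter list \<Rightarrow> nat" where
  "lenR n a = (LEAST k. \<exists>xs. length xs = k \<and> set xs \<subseteq> Rset n \<union> finv ` Rset n \<and> fprod xs = a)"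

definition leR :: "nat \<Rightarrow> letter list \<Rightarrow> letter list \<Rightarrow> bool" where
  "leR n a b \<longleftrightarrow> lenR n a + lenR n (fmul (finv a) b) = lenR n b"

definition intervalR :: "nat \<Rightarrow> letter list \<Rightarrow> letter list set" where
  "intervalR n b = {a \<in> FG n. leR n a b}"

definition hom_ext :: "(nat \<Rightarrow> letter list) \<Rightarrow> letter list \<Rightarrow> letter list" where
  "hom_ext \<phi> w = foldr (\<lambda>(i, b) acc. fmul (if b then finv (\<phi> i) else \<phi> i) acc) w []"

text \<open>Images of the generators under sigma_i (e = False) and its inverse (e = True).\<close>
definition sig_img :: "nat \<Rightarrow> bool \<Rightarrow> nat \<Rightarrow> letter list" where
  "sig_img i e j =
     (if \<not> e then
        (if j = i then gen (i+1)
         else if j = i+1 then [(i+1, True), (i, False), (i+1, False)]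
         else gen j)
      else
        (if j = i+1 then gen i
         else if j = i then [(i, False), (i+1, False), (i, True)]
         else gen j))"

text \<open>A braid is given by a word in sigma_i^{+-1} (letter (i, False) = sigma_i,
  (i, True) = sigma_i inverse), with 1 <= i <= n-1; the action is the left action
  sigma_{i_1}^{e_1} ... sigma_{i_k}^{e_k} * a = s_1 * (s_2 * ( ... (s_k * a))).\<close>
definition braid_words :: "nat \<Rightarrow> (nat \<times> bool) list set" where
  "braid_words n = {\<tau>. \<forall>l \<in> set \<tau>. fst l \<in> {1..<n}}"

definition braid_act :: "(nat \<times> bool) list \<Rightarrow> letter list \<Rightarrow> letter list" where
  "braid_act \<tau> a = foldr (\<lambda>(i, e) x. hom_ext (sig_img i e) x) \<tau> a"

end

theory Submission
  imports Defs
begin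

(* Each sigma_i^(+-1) acts by the endomorphism of F_n sending every f_j to a conjugate of a
   generator. Such an endomorphism maps each conjugate of a generator again to one, so every
   braid maps R and R^-1 into themselves. The word with reversed order and flipped exponents acts
   as the inverse map, so the action is an automorphism of F_n preserving R^(+-1) in both
   directions; it therefore preserves l_R, and with it <=_R. Finally sigma_i sends f_i f_(i+1) to
   f_(i+1) (f_(i+1)^-1 f_i f_(i+1)) = f_i f_(i+1) and fixes every other f_j, so every braid fixes
   g and maps the interval [1,g]_R onto itself. *)

section \<open>Free reduction\<close>

definition linv :: "letter \<Rightarrow> letter" where
  "linv l = (fst l, \<not> snd l)"

lemma linv_linv [simp]: "linv (linv x) = x"
  by (simp add: linv_def)

lemma fst_linv [simp]: "fst (linv x) = fst x"
  by (simp add: linv_def)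

lemma cancels_iff_linv: "(fst x = fst y \<and> snd x \<noteq> snd y) \<longleftrightarrow> y = linv x"
  by (auto simp: linv_def prod_eq_iff)

lemma red_cons_Cons [simp]: "red_cons x (y # ys) = (if y = linv x then ys else x # y # ys)"
  by (simp only: red_cons.simps(2) cancels_iff_linv)

lemma reduced_Cons_Cons [simp]: "reduced (x # y # ys) \<longleftrightarrow> y \<noteq> linv x \<and> reduced (y # ys)"
  by (simp only: reduced.simps(3) cancels_iff_linv)

declare red_cons.simps(2) [simp del] reduced.simps(3) [simp del]

lemma reduced_iff_no_cancellation: "reduced w \<longleftrightarrow> (\<forall>as x bs. w \<noteq> as @ x # linv x # bs)"
proof (induction w rule: reduced.induct)
  case (3 x y ys)
  have "(\<forall>as z bs. x # y # ys \<noteq> as @ z # linv z # bs) \<longleftrightarrow>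
      y \<noteq> linv x \<and> (\<forall>as z bs. y # ys \<noteq> as @ z # linv z # bs)"
  proof
    assume "\<forall>as z bs. x # y # ys \<noteq> as @ z # linv z # bs"
    then show "y \<noteq> linv x \<and> (\<forall>as z bs. y # ys \<noteq> as @ z # linv z # bs)"
      by (metis append_Cons append_Nil)
  next
    assume "y \<noteq> linv x \<and> (\<forall>as z bs. y # ys \<noteq> as @ z # linv z # bs)"
    then show "\<forall>as z bs. x # y # ys \<noteq> as @ z # linv z # bs"
      by (auto simp: Cons_eq_append_conv)
  qed
  with 3 show ?case
    by simp
qed (auto simp: Cons_eq_append_conv)

lemma reduced_tl: "reduced (x # ys) \<Longrightarrow> reduced ys"
  by (cases ys) auto

lemma reduced_red_cons: "reduced ys \<Longrightarrow> reduced (red_cons x ys)"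
  by (cases ys) (auto dest: reduced_tl)

lemma reduced_foldr_red_cons: "reduced acc \<Longrightarrow> reduced (foldr red_cons xs acc)"
  by (induction xs) (auto intro: reduced_red_cons)

lemma reduce_Nil [simp]: "reduce [] = []"
  by (simp add: reduce_def)

lemma reduce_Cons: "reduce (x # xs) = red_cons x (reduce xs)"
  by (simp add: reduce_def)

lemma reduced_reduce [simp]: "reduced (reduce xs)"
  by (simp add: reduce_def reduced_foldr_red_cons)

lemma reduce_reduced: "reduced xs \<Longrightarrow> reduce xs = xs"
proof (induction xs)
  case (Cons x xs)
  then have "reduce xs = xs"
    using reduced_tl by blast
  with Cons.prems show ?case
    by (cases xs) (auto simp: reduce_Cons)
qed simp

lemma reduce_reduce [simp]: "reduce (reduce xs) = reduce xs"
  by (simp add: reduce_reduced)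

lemma red_cons_linv_cancel: "reduced s \<Longrightarrow> red_cons (linv y) (red_cons y s) = s"
  by (cases s rule: reduced.cases) auto

lemma red_cons_foldr: "reduced acc \<Longrightarrow>
    red_cons x (foldr red_cons r acc) = foldr red_cons (red_cons x r) acc"
proof (cases r)
  case (Cons y r')
  assume "reduced acc"
  then have "red_cons (linv y) (red_cons y (foldr red_cons r' acc)) = foldr red_cons r' acc"
    by (intro red_cons_linv_cancel reduced_foldr_red_cons)
  with Cons show ?thesis
    by auto
qed simp

lemma foldr_red_cons_reduce: "reduced acc \<Longrightarrow> foldr red_cons xs acc = foldr red_cons (reduce xs) acc"
  by (induction xs) (simp_all add: reduce_Cons red_cons_foldr)

lemma reduce_append: "reduce (xs @ ys) = foldr red_cons xs (reduce ys)"
  by (simp add: reduce_def)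

lemma reduce_append_right: "reduce (xs @ reduce ys) = reduce (xs @ ys)"
  by (simp add: reduce_append)

lemma reduce_append_left: "reduce (reduce xs @ ys) = reduce (xs @ ys)"
  using foldr_red_cons_reduce[of "reduce ys" xs] by (simp add: reduce_append)

lemma finv_eq: "finv x = rev (map linv x)"
  by (induction x) (auto simp: finv_def linv_def)

lemma finv_Nil [simp]: "finv [] = []"
  by (simp add: finv_def)

lemma finv_Cons: "finv (x # xs) = finv xs @ [linv x]"
  by (simp add: finv_eq)

lemma finv_append: "finv (xs @ ys) = finv ys @ finv xs"
  by (simp add: finv_eq)

lemma finv_finv [simp]: "finv (finv xs) = xs"
  by (simp add: finv_eq rev_map comp_def)

lemma set_finv [simp]: "set (finv xs) = linv ` set xs"
  by (simp add: finv_eq)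

lemma reduce_finv_append_cancel [simp]: "reduce (finv x @ x) = []"
proof (induction x)
  case (Cons y x)
  have "reduce (finv (y # x) @ y # x) =
      foldr red_cons (finv x) (red_cons (linv y) (red_cons y (reduce x)))"
    by (simp add: finv_Cons reduce_append reduce_Cons)
  also have "\<dots> = reduce (finv x @ x)"
    by (simp add: red_cons_linv_cancel reduce_append)
  finally show ?case
    using Cons by simp
qed simp

lemma reduce_append_finv_cancel [simp]: "reduce (x @ finv x) = []"
  using reduce_finv_append_cancel[of "finv x"] by simp

lemma reduced_finv: "reduced w \<Longrightarrow> reduced (finv w)"
  unfolding reduced_iff_no_cancellation
  by (metis finv_finv finv_append finv_Cons append_Cons append_assoc append_Nil linv_linv)

lemma reduced_inverse_unique:
  assumes "reduced u" "reduced v" "reduce (u @ v) = []"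
  shows "u = finv v"
proof -
  have "u = reduce (u @ reduce (v @ finv v))"
    using assms by (simp add: reduce_reduced)
  also have "\<dots> = reduce (reduce (u @ v) @ finv v)"
    by (simp only: reduce_append_right reduce_append_left append_assoc)
  also have "\<dots> = finv v"
    using assms by (simp add: reduce_reduced reduced_finv)
  finally show ?thesis .
qed

lemma reduce_finv: "reduce (finv w) = finv (reduce w)"
  by (rule reduced_inverse_unique) (simp_all add: reduce_append_left reduce_append_right)

lemma set_reduce_subset: "set (reduce w) \<subseteq> set w"
proof (induction w)
  case (Cons x w)
  then show ?case
    by (cases "reduce w") (auto simp: reduce_Cons)
qed simp

lemma fmul_assoc: "fmul (fmul x y) z = fmul x (fmul y z)"
  by (simp add: fmul_def reduce_append_left reduce_append_right)

lemma fmul_Nil_right: "fmul x [] = reduce x"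
  by (simp add: fmul_def)

lemma finv_fmul: "finv (fmul x y) = fmul (finv y) (finv x)"
  by (simp add: fmul_def reduce_finv[symmetric] finv_append)

lemma fprod_eq: "fprod xs = reduce (concat xs)"
  by (induction xs) (simp_all add: fprod_def fmul_def reduce_append_right)

lemma fprod_append: "fprod (xs @ ys) = fmul (fprod xs) (fprod ys)"
  by (simp add: fprod_eq fmul_def reduce_append_left reduce_append_right)

lemma Nil_FG: "[] \<in> FG n"
  by (simp add: FG_def)

lemma gen_FG: "k \<in> {1..n} \<Longrightarrow> gen k \<in> FG n"
  by (simp add: FG_def gen_def)

lemma fmul_FG: "x \<in> FG n \<Longrightarrow> y \<in> FG n \<Longrightarrow> fmul x y \<in> FG n"
  using set_reduce_subset by (fastforce simp: FG_def fmul_def)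

lemma finv_FG: "x \<in> FG n \<Longrightarrow> finv x \<in> FG n"
  by (auto simp: FG_def reduced_finv)

lemma fprod_FG: "set xs \<subseteq> FG n \<Longrightarrow> fprod xs \<in> FG n"
  by (induction xs) (simp_all add: fprod_def Nil_FG fmul_FG)

definition letter_img :: "(nat \<Rightarrow> letter list) \<Rightarrow> letter \<Rightarrow> letter list" where
  "letter_img \<phi> l = (if snd l then finv (\<phi> (fst l)) else \<phi> (fst l))"

lemma letter_img_linv: "letter_img \<phi> (linv x) = finv (letter_img \<phi> x)"
  by (simp add: letter_img_def linv_def)

lemma hom_ext_Nil [simp]: "hom_ext \<phi> [] = []"
  by (simp add: hom_ext_def)

lemma hom_ext_Cons: "hom_ext \<phi> (x # w) = fmul (letter_img \<phi> x) (hom_ext \<phi> w)"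
  by (cases x) (simp add: hom_ext_def letter_img_def)

lemma hom_ext_eq: "hom_ext \<phi> w = reduce (concat (map (letter_img \<phi>) w))"
  by (induction w) (simp_all add: hom_ext_Cons fmul_def reduce_append_right)

lemma reduced_hom_ext [simp]: "reduced (hom_ext \<phi> w)"
  by (simp add: hom_ext_eq)

lemma hom_ext_gen: "hom_ext \<phi> (gen k) = reduce (\<phi> k)"
  by (simp add: gen_def hom_ext_Cons letter_img_def fmul_Nil_right)

lemma reduce_concat_letter_img_red_cons:
  "reduce (concat (map (letter_img \<phi>) (red_cons x r))) =
    reduce (letter_img \<phi> x @ concat (map (letter_img \<phi>) r))"
proof (cases r)
  case (Cons y r')
  show ?thesis
  proof (cases "y = linv x")
    case True
    have "reduce (letter_img \<phi> x @ concat (map (letter_img \<phi>) r)) =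
        reduce (reduce (letter_img \<phi> x @ finv (letter_img \<phi> x)) @ concat (map (letter_img \<phi>) r'))"
      using Cons True
      by (simp only: reduce_append_left letter_img_linv list.map concat.simps append_assoc)
    with Cons True show ?thesis
      by simp
  qed (use Cons in simp)
qed simp

lemma hom_ext_reduce: "hom_ext \<phi> (reduce w) = hom_ext \<phi> w"
proof (induction w)
  case (Cons x w)
  have "hom_ext \<phi> (reduce (x # w)) = reduce (letter_img \<phi> x @ hom_ext \<phi> (reduce w))"
    by (simp add: hom_ext_eq reduce_Cons reduce_concat_letter_img_red_cons reduce_append_right)
  with Cons show ?case
    by (simp add: hom_ext_eq reduce_append_right)
qed simp

lemma hom_ext_fmul: "hom_ext \<phi> (fmul x y) = fmul (hom_ext \<phi> x) (hom_ext \<phi> y)"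
  unfolding fmul_def hom_ext_reduce
  by (simp add: hom_ext_eq reduce_append_left reduce_append_right)

lemma hom_ext_finv: "hom_ext \<phi> (finv x) = finv (hom_ext \<phi> x)"
proof (rule reduced_inverse_unique)
  show "reduce (hom_ext \<phi> (finv x) @ hom_ext \<phi> x) = []"
    using hom_ext_fmul[of \<phi> "finv x" x] by (simp add: fmul_def)
qed simp_all

lemma hom_ext_comp: "hom_ext \<psi> (hom_ext \<phi> w) = hom_ext (\<lambda>j. hom_ext \<psi> (\<phi> j)) w"
  by (induction w) (simp_all add: hom_ext_Cons hom_ext_fmul letter_img_def hom_ext_finv)

lemma hom_ext_gen_eq_reduce: "hom_ext gen w = reduce w"
proof -
  have "letter_img gen x = [x]" for x
    by (cases x) (auto simp: letter_img_def gen_def finv_eq linv_def)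
  then have "concat (map (letter_img gen) w) = w"
    by (induction w) auto
  then show ?thesis
    by (simp add: hom_ext_eq)
qed

lemma hom_ext_FG:
  assumes "w \<in> FG n" and "\<And>j. j \<in> {1..n} \<Longrightarrow> \<phi> j \<in> FG n"
  shows "hom_ext \<phi> w \<in> FG n"
proof -
  have "fst l \<in> {1..n}" if "l \<in> set (concat (map (letter_img \<phi>) w))" for l
  proof -
    from that obtain x where x: "x \<in> set w" "l \<in> set (letter_img \<phi> x)"
      by auto
    then have "fst l \<in> fst ` set (\<phi> (fst x))"
      by (force simp: letter_img_def split: if_splits)
    moreover have "\<phi> (fst x) \<in> FG n"
      using x(1) assms by (auto simp: FG_def)
    ultimately show ?thesis
      by (auto simp: FG_def)
  qed
  then show ?thesis
    using set_reduce_subset by (fastforce simp: FG_def hom_ext_eq)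
qed

lemma Rset_conj:
  assumes "r \<in> Rset n" and u: "u \<in> FG n"
  shows "fmul (fmul u r) (finv u) \<in> Rset n"
proof -
  from \<open>r \<in> Rset n\<close> obtain v k where v: "r = fmul (fmul v (gen k)) (finv v)" "v \<in> FG n" "k \<in> {1..n}"
    by (auto simp: Rset_def)
  then have "fmul (fmul u r) (finv u) = fmul (fmul (fmul u v) (gen k)) (finv (fmul u v))"
    by (simp add: fmul_assoc finv_fmul)
  with u v show ?thesis
    unfolding Rset_def by (blast intro: fmul_FG)
qed

lemma gen_Rset:
  assumes "k \<in> {1..n}"
  shows "gen k \<in> Rset n"
proof -
  have "gen k = fmul (fmul [] (gen k)) (finv [])"
    by (simp add: fmul_def gen_def reduce_Cons)
  then show ?thesis
    unfolding Rset_def using assms Nil_FG by blast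
qed

lemma Rset_subset_FG: "Rset n \<subseteq> FG n"
  by (auto simp: Rset_def intro!: fmul_FG finv_FG gen_FG)

lemma hom_ext_Rset:
  assumes \<phi>: "\<And>j. j \<in> {1..n} \<Longrightarrow> \<phi> j \<in> Rset n" and "r \<in> Rset n"
  shows "hom_ext \<phi> r \<in> Rset n"
proof -
  from \<open>r \<in> Rset n\<close> obtain v k
    where v: "r = fmul (fmul v (gen k)) (finv v)" "v \<in> FG n" "k \<in> {1..n}"
    by (auto simp: Rset_def)
  have "\<phi> k \<in> FG n"
    using \<phi>[OF v(3)] Rset_subset_FG by blast
  then have gen_img: "hom_ext \<phi> (gen k) = \<phi> k"
    by (simp add: hom_ext_gen FG_def reduce_reduced)
  have "hom_ext \<phi> v \<in> FG n"
    using v(2) \<phi> Rset_subset_FG by (blast intro: hom_ext_FG)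
  then show ?thesis
    using Rset_conj[OF \<phi>[OF v(3)]] v(1) gen_img by (simp add: hom_ext_fmul hom_ext_finv)
qed

section \<open>The Artin action\<close>

lemma sig_img_Rset:
  assumes i: "i \<in> {1..<n}" and j: "j \<in> {1..n}"
  shows "sig_img i e j \<in> Rset n"
proof -
  have "fmul (fmul [(i+1, True)] (gen i)) (finv [(i+1, True)]) \<in> Rset n"
    using i by (intro Rset_conj gen_Rset) (auto simp: FG_def)
  moreover have "fmul (fmul [(i, False)] (gen (i+1))) (finv [(i, False)]) \<in> Rset n"
    using i by (intro Rset_conj gen_Rset) (auto simp: FG_def)
  ultimately show ?thesis
    using i j gen_Rset
    by (auto simp: sig_img_def fmul_def gen_def finv_eq linv_def reduce_Cons)
qed

lemma sig_img_inverse: "hom_ext (sig_img i (\<not> e)) (sig_img i e j) = gen j"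
  by (cases e)
    (auto simp: sig_img_def hom_ext_Cons letter_img_def gen_def fmul_def finv_eq linv_def reduce_Cons)

lemma braid_act_Nil [simp]: "braid_act [] a = a"
  by (simp add: braid_act_def)

lemma braid_act_Cons: "braid_act (x # \<tau>) a = hom_ext (sig_img (fst x) (snd x)) (braid_act \<tau> a)"
  by (cases x) (simp add: braid_act_def)

lemma braid_act_append: "braid_act (\<sigma> @ \<tau>) a = braid_act \<sigma> (braid_act \<tau> a)"
  by (simp add: braid_act_def)

lemma braid_act_fmul: "braid_act \<tau> (fmul x y) = fmul (braid_act \<tau> x) (braid_act \<tau> y)"
  by (induction \<tau>) (simp_all add: braid_act_Cons hom_ext_fmul)

lemma braid_act_finv: "braid_act \<tau> (finv x) = finv (braid_act \<tau> x)"
  by (induction \<tau>) (simp_all add: braid_act_Cons hom_ext_finv)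

lemma braid_act_fprod: "braid_act \<tau> (fprod xs) = fprod (map (braid_act \<tau>) xs)"
proof (induction xs)
  case Nil
  show ?case
    by (induction \<tau>) (simp_all add: fprod_def braid_act_Cons)
qed (simp_all add: fprod_def braid_act_fmul)

definition braid_inv :: "(nat \<times> bool) list \<Rightarrow> (nat \<times> bool) list" where
  "braid_inv \<tau> = rev (map (\<lambda>(i, e). (i, \<not> e)) \<tau>)"

lemma braid_inv_braid_inv [simp]: "braid_inv (braid_inv \<tau>) = \<tau>"
  by (simp add: braid_inv_def rev_map comp_def case_prod_beta)

lemma braid_inv_braid_words: "\<tau> \<in> braid_words n \<Longrightarrow> braid_inv \<tau> \<in> braid_words n"
  by (auto simp: braid_inv_def braid_words_def)

lemma braid_act_reduced: "reduced a \<Longrightarrow> reduced (braid_act \<tau> a)"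
  by (cases \<tau>) (simp_all add: braid_act_Cons)

lemma braid_act_braid_inv: "reduced a \<Longrightarrow> braid_act (braid_inv \<tau>) (braid_act \<tau> a) = a"
proof (induction \<tau>)
  case (Cons x \<tau>)
  obtain i e where x: "x = (i, e)"
    by force
  have "(\<lambda>j. hom_ext (sig_img i (\<not> e)) (sig_img i e j)) = gen"
    by (simp add: sig_img_inverse)
  then have "hom_ext (sig_img i (\<not> e)) (hom_ext (sig_img i e) b) = b" if "reduced b" for b
    using that by (simp add: hom_ext_comp hom_ext_gen_eq_reduce reduce_reduced)
  with Cons show ?case
    by (simp add: x braid_inv_def braid_act_append braid_act_Cons braid_act_reduced)
qed (simp add: braid_inv_def)

lemma braid_act_FG: "\<tau> \<in> braid_words n \<Longrightarrow> a \<in> FG n \<Longrightarrow> braid_act \<tau> a \<in> FG n"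
  by (induction \<tau>)
    (auto simp: braid_words_def braid_act_Cons
      intro!: hom_ext_FG sig_img_Rset[THEN subsetD[OF Rset_subset_FG]])

lemma braid_act_Rset: "\<tau> \<in> braid_words n \<Longrightarrow> r \<in> Rset n \<Longrightarrow> braid_act \<tau> r \<in> Rset n"
  by (induction \<tau>) (auto simp: braid_words_def braid_act_Cons intro!: hom_ext_Rset sig_img_Rset)

lemma gelt_eq: "gelt n = map (\<lambda>j. (j, False)) [1..<n+1]"
proof -
  have "reduced (map (\<lambda>j. (j, False)) js)" for js :: "nat list"
    by (induction js rule: induct_list012) (simp_all add: linv_def)
  moreover have "concat (map gen js) = map (\<lambda>j. (j, False)) js" for js
    by (induction js) (simp_all add: gen_def)
  ultimately show ?thesis
    by (simp add: gelt_def fprod_eq reduce_reduced)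
qed

lemma gelt_FG: "gelt n \<in> FG n"
  by (auto simp: gelt_def intro!: fprod_FG gen_FG)

lemma hom_ext_gelt: "hom_ext \<phi> (gelt n) = fprod (map \<phi> [1..<n+1])"
  by (simp add: gelt_eq hom_ext_eq fprod_eq letter_img_def comp_def)

lemma sig_img_fixes_gelt:
  assumes i: "i \<in> {1..<n}"
  shows "hom_ext (sig_img i e) (gelt n) = gelt n"
proof -
  let ?\<phi> = "sig_img i e"
  have split: "[1..<n+1] = [1..<i] @ [i, i+1] @ [i+2..<n+1]"
    using i upt_add_eq_append[of 1 i "n+1-i"] by (simp add: upt_conv_Cons)
  have "map ?\<phi> [1..<i] = map gen [1..<i]" "map ?\<phi> [i+2..<n+1] = map gen [i+2..<n+1]"
    by (auto simp: sig_img_def)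
  moreover have "fprod [?\<phi> i, ?\<phi> (i+1)] = fprod [gen i, gen (i+1)]"
    by (cases e) (simp_all add: fprod_eq sig_img_def gen_def reduce_Cons linv_def)
  ultimately have "fprod (map ?\<phi> [1..<n+1]) = fprod (map gen [1..<n+1])"
    unfolding split by (simp only: map_append fprod_append list.map)
  then show ?thesis
    unfolding hom_ext_gelt by (simp only: gelt_def)
qed

lemma braid_act_gelt: "\<tau> \<in> braid_words n \<Longrightarrow> braid_act \<tau> (gelt n) = gelt n"
  by (induction \<tau>) (auto simp: braid_act_Cons braid_words_def sig_img_fixes_gelt)

section \<open>Invariance of reflection length and of the interval\<close>

lemma FG_fprod_Rset_letters:
  assumes a: "a \<in> FG n"
  shows "\<exists>xs. set xs \<subseteq> Rset n \<union> finv ` Rset n \<and> fprod xs = a"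
proof (intro exI conjI)
  show "set (map (\<lambda>l. [l]) a) \<subseteq> Rset n \<union> finv ` Rset n"
  proof
    fix w
    assume "w \<in> set (map (\<lambda>l. [l]) a)"
    then obtain k b where "(k, b) \<in> set a" "w = [(k, b)]"
      by auto
    moreover from this a have "k \<in> {1..n}"
      by (auto simp: FG_def)
    moreover have "w = gen k \<or> w = finv (gen k)"
      using \<open>w = [(k, b)]\<close> by (cases b) (simp_all add: gen_def finv_eq linv_def)
    ultimately show "w \<in> Rset n \<union> finv ` Rset n"
      using gen_Rset[of k n] by auto
  qed
  have "concat (map (\<lambda>l. [l]) a) = a"
    by (induction a) auto
  with a show "fprod (map (\<lambda>l. [l]) a) = a"
    by (simp add: fprod_eq FG_def reduce_reduced)
qed

lemma lenR_map_le:
  assumes hom: "\<And>xs. h (fprod xs) = fprod (map h xs)"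
    and S: "h ` (Rset n \<union> finv ` Rset n) \<subseteq> Rset n \<union> finv ` Rset n"
    and a: "a \<in> FG n"
  shows "lenR n (h a) \<le> lenR n a"
proof -
  let ?P = "\<lambda>b k. \<exists>xs. length xs = k \<and> set xs \<subseteq> Rset n \<union> finv ` Rset n \<and> fprod xs = b"
  have "\<exists>k. ?P a k"
    using FG_fprod_Rset_letters[OF a] by blast
  then have "?P a (lenR n a)"
    unfolding lenR_def by (rule LeastI_ex)
  then obtain xs
    where xs: "length xs = lenR n a" "set xs \<subseteq> Rset n \<union> finv ` Rset n" "fprod xs = a"
    by blast
  moreover have "set (map h xs) \<subseteq> Rset n \<union> finv ` Rset n"
    using xs(2) S by (metis image_mono order_trans set_map)
  ultimately have "?P (h a) (lenR n a)"
    using hom by (intro exI[of _ "map h xs"]) auto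
  then show ?thesis
    unfolding lenR_def by (rule Least_le)
qed

lemma lenR_braid_act:
  assumes \<tau>: "\<tau> \<in> braid_words n" and a: "a \<in> FG n"
  shows "lenR n (braid_act \<tau> a) = lenR n a"
proof -
  have le: "lenR n (braid_act \<sigma> b) \<le> lenR n b" if "\<sigma> \<in> braid_words n" "b \<in> FG n" for \<sigma> b
    using that by (intro lenR_map_le) (auto simp: braid_act_fprod braid_act_finv braid_act_Rset)
  have "lenR n a = lenR n (braid_act (braid_inv \<tau>) (braid_act \<tau> a))"
    using a by (simp add: FG_def braid_act_braid_inv)
  also have "\<dots> \<le> lenR n (braid_act \<tau> a)"
    using \<tau> a by (intro le braid_inv_braid_words braid_act_FG)
  finally show ?thesis
    using le[OF \<tau> a] by simp
qed

lemma leR_braid_act_iff: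
  assumes \<tau>: "\<tau> \<in> braid_words n" and "a \<in> FG n" "b \<in> FG n"
  shows "leR n (braid_act \<tau> a) (braid_act \<tau> b) \<longleftrightarrow> leR n a b"
proof -
  have "fmul (finv (braid_act \<tau> a)) (braid_act \<tau> b) = braid_act \<tau> (fmul (finv a) b)"
    by (simp add: braid_act_fmul braid_act_finv)
  moreover have "fmul (finv a) b \<in> FG n"
    using assms by (intro fmul_FG finv_FG)
  ultimately show ?thesis
    using assms by (simp add: leR_def lenR_braid_act)
qed

lemma braid_act_intervalR:
  "\<tau> \<in> braid_words n \<Longrightarrow> a \<in> intervalR n (gelt n) \<Longrightarrow> braid_act \<tau> a \<in> intervalR n (gelt n)"
  using gelt_FG
  by (auto simp: intervalR_def braid_act_FG leR_braid_act_iff[symmetric] braid_act_gelt)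

theorem corollary4p3:
  fixes n :: nat and \<tau> :: "(nat \<times> bool) list"
  assumes "\<tau> \<in> braid_words n"
  shows "bij_betw (braid_act \<tau>) (intervalR n (gelt n)) (intervalR n (gelt n))
    \<and> (\<forall>a \<in> intervalR n (gelt n). \<forall>b \<in> intervalR n (gelt n).
          leR n a b \<longleftrightarrow> leR n (braid_act \<tau> a) (braid_act \<tau> b))"
proof
  have "braid_act (braid_inv \<tau>) (braid_act \<tau> a) = a" "braid_act \<tau> (braid_act (braid_inv \<tau>) a) = a"
    if "a \<in> intervalR n (gelt n)" for a
    using that braid_act_braid_inv[of a] braid_act_braid_inv[of a "braid_inv \<tau>"]
    by (auto simp: intervalR_def FG_def)
  then show "bij_betw (braid_act \<tau>) (intervalR n (gelt n)) (intervalR n (gelt n))"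
    using assms braid_inv_braid_words
    by (intro bij_betw_byWitness[where f' = "braid_act (braid_inv \<tau>)"])
      (auto intro: braid_act_intervalR)
  show "\<forall>a \<in> intervalR n (gelt n). \<forall>b \<in> intervalR n (gelt n).
      leR n a b \<longleftrightarrow> leR n (braid_act \<tau> a) (braid_act \<tau> b)"
    using assms by (simp add: intervalR_def leR_braid_act_iff)
qed

end
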